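(* Let $A$ be an $n$-by-$n$ doubly nonnegative matrix. Then there is an $\epsilon>0$ such that $(\epsilon A+I)^t$ is doubly nonnegative for all $t\ge n-2$.
   Context: A real matrix is doubly nonnegative if it is symmetric, positive semidefinite, and entry-wise nonnegative. For a positive definite matrix $B=\sum_i\mu_ix_ix_i^T$ (orthonormal eigenvectors, $\mu_i>0$) and real $t$, $B^t=\sum_i\mu_i^tx_ix_i^T$. *)

theory Defs
  imports "HOL-Analysis.Analysis"
begin

definition symmetric_matrix :: "real^'n^'n \<Rightarrow> bool" where
  "symmetric_matrix A \<longleftrightarrow> transpose A = A"

definition positive_semidefinite :: "real^'n^'n \<Rightarrow> bool" where
  "positive_semidefinite A \<longleftrightarrow> symmetric_matrix A \<and> (\<forall>x. 0 \<le> x \<bullet> (A *v x))"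

definition positive_definite :: "real^'n^'n \<Rightarrow> bool" where
  "positive_definite A \<longleftrightarrow> symmetric_matrix A \<and> (\<forall>x. x \<noteq> 0 \<longrightarrow> 0 < x \<bullet> (A *v x))"

definition doubly_nonnegative :: "real^'n^'n \<Rightarrow> bool" where
  "doubly_nonnegative A \<longleftrightarrow> symmetric_matrix A \<and> positive_semidefinite A \<and> (\<forall>i j. 0 \<le> A $ i $ j)"

definition outer :: "real^'n \<Rightarrow> real^'n^'n" where
  "outer x = (\<chi> i j. x $ i * x $ j)"

definition mat_rpow :: "real^'n^'n \<Rightarrow> real \<Rightarrow> real^'n^'n" where
  "mat_rpow B t = (SOME C. \<exists>(x :: 'n \<Rightarrow> real^'n) (\<mu> :: 'n \<Rightarrow> real).
      (\<forall>i j. x i \<bullet> x j = (if i = j then 1 else 0)) \<and>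
      (\<forall>i. 0 < \<mu> i) \<and>
      B = (\<Sum>i\<in>UNIV. \<mu> i *\<^sub>R outer (x i)) \<and>
      C = (\<Sum>i\<in>UNIV. (\<mu> i powr t) *\<^sub>R outer (x i)))"

end

theory Submission
  imports Defs
begin

text \<open>Write \<open>t = p + s\<close> with \<open>p\<close> a natural number and \<open>n - 2 \<le> s \<le> n - 1\<close>. Then
  \<open>(\<epsilon>A + I)\<^sup>t\<close> is the product of the entrywise nonnegative matrix \<open>(\<epsilon>A + I)\<^sup>p\<close> with
  \<open>(I + \<epsilon>A)\<^sup>s\<close>, whose \<open>(i, j)\<close> entry is the binomial series \<open>\<Sum>m. (s gchoose m) \<epsilon>\<^sup>m (A\<^sup>m)\<^sub>i\<^sub>j\<close>.
  The coefficients \<open>s gchoose m\<close> are nonnegative for \<open>m \<le> n - 1\<close>, and the first \<open>m\<close> with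
  \<open>(A\<^sup>m)\<^sub>i\<^sub>j > 0\<close> is below \<open>n\<close>, since a positive walk in the digraph of \<open>A\<close> can be shortened
  until no vertex repeats. For \<open>\<epsilon>\<close> small, uniformly in \<open>i\<close>, \<open>j\<close> and \<open>s\<close>, that first nonzero
  term dominates the tail of the series.\<close>

section \<open>Matrices with a given orthonormal eigenbasis\<close>

definition orthonormal_frame :: "('n \<Rightarrow> real^'n) \<Rightarrow> bool" where
  "orthonormal_frame y \<longleftrightarrow> (\<forall>i j. y i \<bullet> y j = (if i = j then 1 else 0))"

definition spectral_matrix :: "('n \<Rightarrow> real^'n) \<Rightarrow> ('n \<Rightarrow> real) \<Rightarrow> real^'n^'n" where
  "spectral_matrix y f = (\<Sum>k\<in>UNIV. f k *\<^sub>R outer (y k))"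

lemma orthonormal_frame_inner:
  "orthonormal_frame y \<Longrightarrow> y i \<bullet> y j = (if i = j then 1 else 0)"
  by (simp add: orthonormal_frame_def)

lemma spectral_matrix_entry:
  "spectral_matrix y f $ i $ j = (\<Sum>k\<in>UNIV. f k * y k $ i * y k $ j)"
  by (simp add: spectral_matrix_def sum_component outer_def mult.assoc)

lemma transpose_spectral_matrix: "transpose (spectral_matrix y f) = spectral_matrix y f"
  by (simp add: vec_eq_iff transpose_def spectral_matrix_entry mult_ac)

lemma spectral_matrix_mult_vec:
  "spectral_matrix y f *v x = (\<Sum>k\<in>UNIV. (f k * (y k \<bullet> x)) *\<^sub>R y k)"
  by (simp add: vec_eq_iff matrix_vector_mult_def spectral_matrix_entry inner_vec_def
      sum_component sum_distrib_left sum_distrib_right mult_ac) (intro allI sum.swap)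

lemma orthonormal_frame_sum:
  assumes "orthonormal_frame y"
  shows "(\<Sum>k\<in>UNIV. c k *\<^sub>R y k) \<bullet> y l = c l"
  by (simp add: inner_sum_left orthonormal_frame_inner[OF assms] if_distrib cong: if_cong)

lemma spectral_matrix_eigenvector:
  assumes "orthonormal_frame y"
  shows "spectral_matrix y f *v y l = f l *\<^sub>R y l"
proof -
  have "(f k * (y k \<bullet> y l)) *\<^sub>R y k = (if k = l then f l *\<^sub>R y l else 0)" for k
    by (simp add: orthonormal_frame_inner[OF assms])
  then show ?thesis
    by (simp add: spectral_matrix_mult_vec inner_commute[of _ "y l"])
qed

lemma spectral_matrix_one:
  fixes y :: "'n \<Rightarrow> real^'n"
  assumes "orthonormal_frame y"
  shows "spectral_matrix y (\<lambda>_. 1) = mat 1"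
proof -
  define Q :: "real^'n^'n" where "Q = (\<chi> i k. y k $ i)"
  have "transpose Q ** Q = mat 1"
    using assms by (simp add: Q_def vec_eq_iff matrix_matrix_mult_def transpose_def mat_def
        inner_vec_def orthonormal_frame_def)
  then have "Q ** transpose Q = mat 1"
    using matrix_left_right_inverse by blast
  then show ?thesis
    by (simp add: vec_eq_iff spectral_matrix_entry Q_def matrix_matrix_mult_def transpose_def)
qed

lemma spectral_matrix_affine:
  assumes "orthonormal_frame y"
  shows "spectral_matrix y (\<lambda>k. a * f k + b) = a *\<^sub>R spectral_matrix y f + b *\<^sub>R mat 1"
  unfolding spectral_matrix_one[OF assms, symmetric]
  by (simp add: spectral_matrix_def scaleR_add_left scaleR_sum_right sum.distrib)

lemma spectral_matrix_of_shift:
  assumes "orthonormal_frame y" "\<epsilon> \<noteq> 0" "\<epsilon> *\<^sub>R A + mat 1 = spectral_matrix y \<mu>"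
  shows "A = spectral_matrix y (\<lambda>k. (\<mu> k - 1) / \<epsilon>)"
proof -
  have "spectral_matrix y \<mu> = \<epsilon> *\<^sub>R spectral_matrix y (\<lambda>k. (\<mu> k - 1) / \<epsilon>) + mat 1"
    using spectral_matrix_affine[OF assms(1), of \<epsilon> "\<lambda>k. (\<mu> k - 1) / \<epsilon>" 1] assms(2) by simp
  then show ?thesis
    using assms(2,3) by simp
qed

lemma spectral_matrix_mult:
  assumes "orthonormal_frame y"
  shows "spectral_matrix y f ** spectral_matrix y g = spectral_matrix y (\<lambda>k. f k * g k)"
proof (subst matrix_eq, intro allI)
  fix x
  have "y l \<bullet> (spectral_matrix y g *v x) = g l * (y l \<bullet> x)" for l
    using orthonormal_frame_sum[OF assms]
    by (simp add: spectral_matrix_mult_vec inner_commute[of "y l"])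
  then show "(spectral_matrix y f ** spectral_matrix y g) *v x = spectral_matrix y (\<lambda>k. f k * g k) *v x"
    by (simp add: matrix_vector_mul_assoc[symmetric] spectral_matrix_mult_vec mult.assoc)
qed

lemma spectral_matrix_quadratic_form:
  "x \<bullet> (spectral_matrix y f *v x) = (\<Sum>k\<in>UNIV. f k * (y k \<bullet> x)\<^sup>2)"
  by (simp add: spectral_matrix_mult_vec inner_sum_right inner_commute power2_eq_square mult_ac)

lemma positive_semidefinite_spectral_matrix:
  assumes "\<And>k. 0 \<le> f k"
  shows "positive_semidefinite (spectral_matrix y f)"
  unfolding positive_semidefinite_def symmetric_matrix_def
  by (simp add: transpose_spectral_matrix spectral_matrix_quadratic_form assms sum_nonneg)

section \<open>The spectral theorem for real symmetric matrices\<close>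

lemma symmetric_matrix_inner:
  "symmetric_matrix M \<Longrightarrow> x \<bullet> (M *v y) = (M *v x) \<bullet> y"
  by (metis dot_lmul_matrix symmetric_matrix_def transpose_matrix_vector)

lemma linear_coefficient_eq_0:
  fixes b c :: real
  assumes "\<And>r. 0 \<le> r * b + r\<^sup>2 * c"
  shows "b = 0"
proof (rule ccontr)
  assume "b \<noteq> 0"
  define K where "K = \<bar>c\<bar> + 1"
  define r where "r = - b / (2 * K)"
  have "K > 0" by (simp add: K_def add_nonneg_pos)
  have "r * b + r\<^sup>2 * c \<le> r * b + r\<^sup>2 * (K - 1)"
    by (simp add: K_def mult_left_mono)
  also have "\<dots> = - b\<^sup>2 * (K + 1) / (4 * K\<^sup>2)"
    using \<open>K > 0\<close> by (simp add: r_def field_simps power2_eq_square)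
  also have "\<dots> < 0"
    using \<open>b \<noteq> 0\<close> \<open>K > 0\<close> by (simp add: divide_neg_pos)
  finally show False
    using assms[of r] by simp
qed

lemma quadratic_form_attains_max_on_subspace:
  fixes M :: "real^'n^'n"
  assumes V: "subspace V" "V \<noteq> {0}"
  obtains u where "u \<in> V" "norm u = 1" "\<And>x. x \<in> V \<Longrightarrow> x \<bullet> (M *v x) \<le> (u \<bullet> (M *v u)) * (x \<bullet> x)"
proof -
  let ?f = "\<lambda>x. x \<bullet> (M *v x)"
  obtain x0 where x0: "x0 \<in> V" "x0 \<noteq> 0"
    using V subspace_0 by blast
  have "x0 /\<^sub>R norm x0 \<in> V \<inter> sphere 0 1"
    using x0 V by (simp add: subspace_scale)
  moreover have "compact (V \<inter> sphere 0 1)"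
    using V closed_subspace compact_Int_closed compact_sphere inf_commute by metis
  moreover have "continuous_on (V \<inter> sphere 0 1) ?f"
    by (intro continuous_intros linear_continuous_on) (auto simp: bounded_linear_def)
  ultimately obtain u where u: "u \<in> V \<inter> sphere 0 1"
    and u_max: "\<And>x. x \<in> V \<inter> sphere 0 1 \<Longrightarrow> ?f x \<le> ?f u"
    using continuous_attains_sup[of "V \<inter> sphere 0 1" ?f] by blast
  have "?f x \<le> ?f u * (x \<bullet> x)" if "x \<in> V" for x
  proof (cases "x = 0")
    case False
    then have "x /\<^sub>R norm x \<in> V \<inter> sphere 0 1"
      using that V by (simp add: subspace_scale)
    then have "?f (x /\<^sub>R norm x) \<le> ?f u"
      by (rule u_max)
    moreover have "?f (x /\<^sub>R norm x) = ?f x / (x \<bullet> x)"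
      by (simp add: matrix_vector_mult_scaleR power2_norm_eq_inner[symmetric] power2_eq_square
          field_simps)
    ultimately show ?thesis
      using False by (simp add: divide_le_eq)
  qed simp
  then show ?thesis
    using u that by auto
qed

lemma symmetric_matrix_maximiser_eigenvector:
  fixes M :: "real^'n^'n"
  assumes sym: "symmetric_matrix M" and V: "subspace V" and inv: "\<And>x. x \<in> V \<Longrightarrow> M *v x \<in> V"
    and u: "u \<in> V" "u \<bullet> u = 1"
    and u_max: "\<And>x. x \<in> V \<Longrightarrow> x \<bullet> (M *v x) \<le> (u \<bullet> (M *v u)) * (x \<bullet> x)"
  shows "M *v u = (u \<bullet> (M *v u)) *\<^sub>R u"
proof -
  let ?f = "\<lambda>x. x \<bullet> (M *v x)" and ?\<mu> = "u \<bullet> (M *v u)"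
  define w where "w = ?\<mu> *\<^sub>R u - M *v u"
  have "w \<in> V"
    using u V inv by (simp add: w_def subspace_diff subspace_scale)
  \<comment> \<open>The form of \<open>?\<mu> I - M\<close> is nonnegative on \<open>V\<close> and vanishes at \<open>u\<close>, so its derivative
    at \<open>u\<close> vanishes in every direction of \<open>V\<close>.\<close>
  have "x \<bullet> w = 0" if "x \<in> V" for x
  proof -
    have "2 * (x \<bullet> w) = 0"
    proof (rule linear_coefficient_eq_0)
      fix r :: real
      have "u + r *\<^sub>R x \<in> V"
        using u that V by (simp add: subspace_add subspace_scale)
      then have "?f (u + r *\<^sub>R x) \<le> ?\<mu> * ((u + r *\<^sub>R x) \<bullet> (u + r *\<^sub>R x))"
        by (rule u_max)
      moreover have "u \<bullet> (M *v x) = x \<bullet> (M *v u)"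
        using symmetric_matrix_inner[OF sym, of u x] by (simp add: inner_commute)
      moreover have xw: "x \<bullet> w = ?\<mu> * (u \<bullet> x) - x \<bullet> (M *v u)"
        by (simp add: w_def inner_diff_right inner_commute)
      ultimately show "0 \<le> r * (2 * (x \<bullet> w)) + r\<^sup>2 * (?\<mu> * (x \<bullet> x) - ?f x)"
        using u(2) unfolding xw
        by (simp add: algebra_simps inner_add_left inner_add_right matrix_vector_mult_scaleR
            power2_eq_square inner_commute[of x u])
    qed
    then show ?thesis by simp
  qed
  then have "w = 0"
    using \<open>w \<in> V\<close> inner_eq_zero_iff by blast
  then show ?thesis
    by (simp add: w_def)
qed

lemma symmetric_matrix_has_eigenvector:
  fixes M :: "real^'n^'n"
  assumes sym: "symmetric_matrix M" and V: "subspace V" "V \<noteq> {0}"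
    and inv: "\<And>x. x \<in> V \<Longrightarrow> M *v x \<in> V"
  shows "\<exists>u\<in>V. norm u = 1 \<and> (\<exists>\<mu>. M *v u = \<mu> *\<^sub>R u)"
proof -
  obtain u where u: "u \<in> V" "norm u = 1"
    and u_max: "\<And>x. x \<in> V \<Longrightarrow> x \<bullet> (M *v x) \<le> (u \<bullet> (M *v u)) * (x \<bullet> x)"
    using quadratic_form_attains_max_on_subspace[OF V] by blast
  then have "M *v u = (u \<bullet> (M *v u)) *\<^sub>R u"
    using symmetric_matrix_maximiser_eigenvector[OF sym V(1) inv] by (simp add: norm_eq_1)
  then show ?thesis
    using u by blast
qed

lemma symmetric_matrix_orthogonal_to_eigenvectors:
  assumes "symmetric_matrix M" "M *v e = \<mu> *\<^sub>R e" "orthogonal e x"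
  shows "orthogonal e (M *v x)"
proof -
  have "e \<bullet> (M *v x) = \<mu> * (e \<bullet> x)"
    using symmetric_matrix_inner[OF assms(1), of e x] assms(2) by simp
  then show ?thesis
    using assms(3) by (simp add: orthogonal_def)
qed

lemma symmetric_matrix_orthonormal_eigenvectors:
  fixes M :: "real^'n^'n"
  assumes sym: "symmetric_matrix M" and "k \<le> CARD('n)"
  shows "\<exists>E. finite E \<and> card E = k \<and> pairwise orthogonal E \<and>
           (\<forall>e\<in>E. norm e = 1 \<and> (\<exists>\<mu>. M *v e = \<mu> *\<^sub>R e))"
  using \<open>k \<le> CARD('n)\<close>
proof (induction k)
  case 0
  show ?case by (intro exI[of _ "{}"]) auto
next
  case (Suc k)
  then obtain E where E: "finite E" "card E = k" "pairwise orthogonal E"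
      "\<forall>e\<in>E. norm e = 1 \<and> (\<exists>\<mu>. M *v e = \<mu> *\<^sub>R e)"
    by auto
  define V where "V = {x. \<forall>e\<in>E. orthogonal e x}"
  have "subspace V"
    unfolding V_def by (rule subspace_orthogonal_to_vectors)
  have "dim E < DIM(real^'n)"
    using dim_le_card'[OF E(1)] E(2) Suc.prems by simp
  then obtain x0 where "x0 \<noteq> 0" "\<And>x. x \<in> span E \<Longrightarrow> orthogonal x0 x"
    using orthogonal_to_subspace_exists by blast
  then have "V \<noteq> {0}"
    unfolding V_def using span_base orthogonal_commute by blast
  have "M *v x \<in> V" if "x \<in> V" for x
    unfolding V_def
  proof (intro CollectI ballI)
    fix e assume "e \<in> E"
    then obtain \<mu> where "M *v e = \<mu> *\<^sub>R e"
      using E(4) by blast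
    moreover have "orthogonal e x"
      using that \<open>e \<in> E\<close> by (simp add: V_def)
    ultimately show "orthogonal e (M *v x)"
      by (rule symmetric_matrix_orthogonal_to_eigenvectors[OF sym])
  qed
  then obtain u where u: "u \<in> V" "norm u = 1" "\<exists>\<mu>. M *v u = \<mu> *\<^sub>R u"
    using symmetric_matrix_has_eigenvector[OF sym \<open>subspace V\<close> \<open>V \<noteq> {0}\<close>] by blast
  have "u \<notin> E"
  proof
    assume "u \<in> E"
    then have "u \<bullet> u = 0"
      using u(1) by (simp add: V_def orthogonal_def)
    then show False
      using u(2) by simp
  qed
  have "pairwise orthogonal (insert u E)"
    using E(3) u(1) by (auto simp: V_def pairwise_insert orthogonal_commute)
  then show ?case
    using E u \<open>u \<notin> E\<close> by (intro exI[of _ "insert u E"]) auto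
qed

lemma orthonormal_frame_bij_betw:
  fixes y :: "'n \<Rightarrow> real^'n"
  assumes "bij_betw y UNIV E" "pairwise orthogonal E" "\<And>e. e \<in> E \<Longrightarrow> norm e = 1"
  shows "orthonormal_frame y"
  unfolding orthonormal_frame_def
proof (intro allI)
  fix i j
  have "y i \<in> E" "y j \<in> E"
    using assms(1) bij_betwE by blast+
  show "y i \<bullet> y j = (if i = j then 1 else 0)"
  proof (cases "i = j")
    case True
    then show ?thesis
      using assms(3) \<open>y i \<in> E\<close> by (simp add: norm_eq_1)
  next
    case False
    then have "y i \<noteq> y j"
      using bij_betw_imp_inj_on[OF assms(1)] by (auto simp: inj_on_def)
    then show ?thesis
      using assms(2) \<open>y i \<in> E\<close> \<open>y j \<in> E\<close> False by (simp add: pairwise_def orthogonal_def)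
  qed
qed

theorem symmetric_matrix_spectral_decomposition:
  fixes M :: "real^'n^'n"
  assumes "symmetric_matrix M"
  shows "\<exists>y f. orthonormal_frame y \<and> M = spectral_matrix y f"
proof -
  obtain E where E: "finite E" "card E = CARD('n)" "pairwise orthogonal E"
      "\<forall>e\<in>E. norm e = 1 \<and> (\<exists>\<mu>. M *v e = \<mu> *\<^sub>R e)"
    using symmetric_matrix_orthonormal_eigenvectors[OF assms order_refl] by blast
  obtain y where y: "bij_betw y (UNIV :: 'n set) E"
    using finite_same_card_bij[of "UNIV :: 'n set" E] E by auto
  then have "y k \<in> E" for k
    using bij_betwE by blast
  then have "\<forall>k. \<exists>\<mu>. M *v y k = \<mu> *\<^sub>R y k"
    using E(4) by blast
  then obtain f where f: "\<And>k. M *v y k = f k *\<^sub>R y k"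
    by metis
  have "orthonormal_frame y"
    using orthonormal_frame_bij_betw[OF y E(3)] E(4) by blast
  have "M *v x = spectral_matrix y f *v x" for x
  proof -
    have "M *v x = M *v (spectral_matrix y (\<lambda>_. 1) *v x)"
      by (simp add: spectral_matrix_one[OF \<open>orthonormal_frame y\<close>])
    also have "\<dots> = (\<Sum>k\<in>UNIV. (y k \<bullet> x) *\<^sub>R (M *v y k))"
      by (simp add: spectral_matrix_mult_vec linear_sum[OF matrix_vector_mul_linear]
          matrix_vector_mult_scaleR)
    also have "\<dots> = spectral_matrix y f *v x"
      by (simp add: spectral_matrix_mult_vec f mult.commute)
    finally show ?thesis .
  qed
  then show ?thesis
    using \<open>orthonormal_frame y\<close> matrix_eq by blast
qed

lemma positive_definite_identity_plus:
  fixes A :: "real^'n^'n"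
  assumes "positive_semidefinite A" "0 \<le> \<epsilon>"
  shows "positive_definite (\<epsilon> *\<^sub>R A + mat 1)"
  unfolding positive_definite_def symmetric_matrix_def
proof (intro conjI allI impI)
  have "transpose A = A"
    using assms(1) by (simp add: positive_semidefinite_def symmetric_matrix_def)
  have "A $ j $ i = A $ i $ j" for i j
  proof -
    have "A $ j $ i = transpose A $ i $ j"
      by (simp add: transpose_def)
    then show ?thesis
      using \<open>transpose A = A\<close> by simp
  qed
  then show "transpose (\<epsilon> *\<^sub>R A + mat 1) = \<epsilon> *\<^sub>R A + mat 1"
    by (simp add: vec_eq_iff transpose_def mat_def)
  fix x :: "real^'n"
  assume "x \<noteq> 0"
  moreover have "0 \<le> \<epsilon> * (x \<bullet> (A *v x))"
    using assms by (simp add: positive_semidefinite_def)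
  ultimately show "0 < x \<bullet> ((\<epsilon> *\<^sub>R A + mat 1) *v x)"
    by (simp add: matrix_vector_mult_add_rdistrib scaleR_matrix_vector_assoc[symmetric] inner_add_right
        add_nonneg_pos)
qed

lemma mat_rpow_spectral:
  fixes B :: "real^'n^'n"
  assumes "positive_definite B"
  obtains y \<mu> where "orthonormal_frame y" "\<And>k. 0 < \<mu> k" "B = spectral_matrix y \<mu>"
    "mat_rpow B t = spectral_matrix y (\<lambda>k. \<mu> k powr t)"
proof -
  obtain y \<mu> where y: "orthonormal_frame y" "B = spectral_matrix y \<mu>"
    using symmetric_matrix_spectral_decomposition assms positive_definite_def by blast
  have "0 < \<mu> k" for k
  proof -
    have "y k \<bullet> y k = 1"
      using orthonormal_frame_inner[OF y(1)] by simp
    then have "y k \<noteq> 0" and "y k \<bullet> (B *v y k) = \<mu> k"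
      by (auto simp: y(2) spectral_matrix_eigenvector[OF y(1)])
    then show ?thesis
      using assms by (auto simp: positive_definite_def)
  qed
  then have "\<exists>C y \<mu>. orthonormal_frame y \<and> (\<forall>k. 0 < \<mu> k) \<and> B = spectral_matrix y \<mu> \<and>
      C = spectral_matrix y (\<lambda>k. \<mu> k powr t)"
    using y by blast
  from someI_ex[OF this] show ?thesis
    using that unfolding mat_rpow_def orthonormal_frame_def spectral_matrix_def by blast
qed

section \<open>Entrywise nonnegative matrices and their powers\<close>

definition nonneg_matrix :: "real^'n^'m \<Rightarrow> bool" where
  "nonneg_matrix A \<longleftrightarrow> (\<forall>i j. 0 \<le> A $ i $ j)"

lemma nonneg_matrix_mat: "0 \<le> c \<Longrightarrow> nonneg_matrix (mat c)"
  by (simp add: nonneg_matrix_def mat_def)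

lemma nonneg_matrix_mult:
  "nonneg_matrix A \<Longrightarrow> nonneg_matrix B \<Longrightarrow> nonneg_matrix (A ** B)"
  by (simp add: nonneg_matrix_def matrix_matrix_mult_def sum_nonneg)

lemma nonneg_matrix_mult_entry_pos_iff:
  assumes "nonneg_matrix A" "nonneg_matrix B"
  shows "0 < (A ** B) $ i $ j \<longleftrightarrow> (\<exists>l. 0 < A $ i $ l \<and> 0 < B $ l $ j)"
proof -
  have nonneg: "0 \<le> A $ i $ l * B $ l $ j" for l
    using assms by (simp add: nonneg_matrix_def)
  then have "0 < (A ** B) $ i $ j \<longleftrightarrow> (\<exists>l. 0 < A $ i $ l * B $ l $ j)"
    by (simp add: matrix_matrix_mult_def less_le sum_nonneg sum_nonneg_eq_0_iff)
  also have "\<dots> \<longleftrightarrow> (\<exists>l. 0 < A $ i $ l \<and> 0 < B $ l $ j)"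
    using assms by (auto simp: nonneg_matrix_def zero_less_mult_iff less_le)
  finally show ?thesis .
qed

fun matrix_power :: "real^'n^'n \<Rightarrow> nat \<Rightarrow> real^'n^'n" where
  "matrix_power A 0 = mat 1"
| "matrix_power A (Suc m) = matrix_power A m ** A"

lemma nonneg_matrix_power: "nonneg_matrix A \<Longrightarrow> nonneg_matrix (matrix_power A m)"
  by (induction m) (simp_all add: nonneg_matrix_mat nonneg_matrix_mult)

definition entry_sum :: "real^'n^'m \<Rightarrow> real" where
  "entry_sum A = (\<Sum>i\<in>UNIV. \<Sum>j\<in>UNIV. A $ i $ j)"

lemma matrix_power_entry_le:
  assumes "nonneg_matrix A"
  shows "matrix_power A m $ i $ j \<le> entry_sum A ^ m"
proof (induction m arbitrary: j)
  case 0
  show ?case by (simp add: mat_def)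
next
  case (Suc m)
  let ?S = "entry_sum A"
  have A: "0 \<le> A $ k $ j" "A $ k $ j \<le> (\<Sum>j\<in>UNIV. A $ k $ j)" for k j
    using assms by (auto simp: nonneg_matrix_def intro: member_le_sum)
  have "matrix_power A (Suc m) $ i $ j \<le> (\<Sum>k\<in>UNIV. ?S ^ m * A $ k $ j)"
    by (simp add: matrix_matrix_mult_def) (intro sum_mono mult_right_mono Suc A)
  also have "\<dots> \<le> ?S ^ m * ?S"
    using A by (auto simp: entry_sum_def sum_distrib_left[symmetric] sum_nonneg
        intro!: mult_left_mono sum_mono)
  finally show ?case
    by (simp add: mult.commute)
qed

lemma spectral_matrix_power:
  assumes "orthonormal_frame y"
  shows "matrix_power (spectral_matrix y f) m = spectral_matrix y (\<lambda>k. f k ^ m)"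
  by (induction m) (simp_all add: spectral_matrix_one[OF assms] spectral_matrix_mult[OF assms] mult.commute)

lemma spectral_matrix_powr_add:
  assumes "orthonormal_frame y" "\<And>k. 0 < \<mu> k"
  shows "spectral_matrix y (\<lambda>k. \<mu> k powr (real p + s)) =
    matrix_power (spectral_matrix y \<mu>) p ** spectral_matrix y (\<lambda>k. \<mu> k powr s)"
  using assms by (simp add: spectral_matrix_power spectral_matrix_mult powr_add powr_realpow)

lemma doubly_nonnegative_spectral_matrix:
  assumes "\<And>k. 0 \<le> f k" "nonneg_matrix (spectral_matrix y f)"
  shows "doubly_nonnegative (spectral_matrix y f)"
proof -
  have "positive_semidefinite (spectral_matrix y f)"
    using assms(1) by (rule positive_semidefinite_spectral_matrix)
  then show ?thesis
    using assms(2) by (simp add: doubly_nonnegative_def positive_semidefinite_def nonneg_matrix_def)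
qed

definition positive_walk :: "real^'n^'n \<Rightarrow> nat \<Rightarrow> (nat \<Rightarrow> 'n) \<Rightarrow> bool" where
  "positive_walk A m v \<longleftrightarrow> (\<forall>k<m. 0 < A $ v k $ v (Suc k))"

lemma matrix_power_entry_pos_iff_walk:
  assumes "nonneg_matrix A"
  shows "0 < matrix_power A m $ i $ j \<longleftrightarrow> (\<exists>v. v 0 = i \<and> v m = j \<and> positive_walk A m v)"
proof (induction m arbitrary: j)
  case 0
  show ?case
    by (auto simp: mat_def positive_walk_def intro: exI[of _ "\<lambda>_. j"])
next
  case (Suc m)
  have "0 < matrix_power A (Suc m) $ i $ j \<longleftrightarrow>
      (\<exists>l. (\<exists>v. v 0 = i \<and> v m = l \<and> positive_walk A m v) \<and> 0 < A $ l $ j)"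
    using assms by (simp add: nonneg_matrix_mult_entry_pos_iff nonneg_matrix_power Suc.IH)
  also have "\<dots> \<longleftrightarrow> (\<exists>v. v 0 = i \<and> v (Suc m) = j \<and> positive_walk A (Suc m) v)"
  proof
    assume "\<exists>l. (\<exists>v. v 0 = i \<and> v m = l \<and> positive_walk A m v) \<and> 0 < A $ l $ j"
    then obtain v where "v 0 = i" "positive_walk A m v" "0 < A $ v m $ j"
      by blast
    then show "\<exists>v. v 0 = i \<and> v (Suc m) = j \<and> positive_walk A (Suc m) v"
      by (intro exI[of _ "v(Suc m := j)"]) (auto simp: positive_walk_def less_Suc_eq)
  next
    assume "\<exists>v. v 0 = i \<and> v (Suc m) = j \<and> positive_walk A (Suc m) v"
    then obtain v where "v 0 = i" "v (Suc m) = j" "positive_walk A (Suc m) v"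
      by blast
    then show "\<exists>l. (\<exists>v. v 0 = i \<and> v m = l \<and> positive_walk A m v) \<and> 0 < A $ l $ j"
      by (intro exI[of _ "v m"]) (auto simp: positive_walk_def)
  qed
  finally show ?case .
qed

lemma positive_walk_shorten:
  fixes v :: "nat \<Rightarrow> 'n::finite"
  assumes walk: "positive_walk A m v" and long: "CARD('n) \<le> m"
  shows "\<exists>w m'. m' < m \<and> w 0 = v 0 \<and> w m' = v m \<and> positive_walk A m' w"
proof -
  have "\<not> inj_on v {0..m}"
  proof
    assume "inj_on v {0..m}"
    then have "card {0..m} \<le> CARD('n)"
      by (rule card_inj_on_le) auto
    then show False
      using long by simp
  qed
  then obtain a b where ab: "a < b" "b \<le> m" "v a = v b"
    unfolding inj_on_def by (metis atLeastAtMost_iff linorder_neqE_nat)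
  define w where "w k = (if k \<le> a then v k else v (k + (b - a)))" for k
  have "positive_walk A (m - (b - a)) w"
    unfolding positive_walk_def
  proof (intro allI impI)
    fix k assume "k < m - (b - a)"
    then show "0 < A $ w k $ w (Suc k)"
      using walk ab unfolding positive_walk_def w_def
      by (cases k a rule: linorder_cases) (auto simp: Suc_diff_le)
  qed
  moreover have "w (m - (b - a)) = v m"
    using ab by (cases "b = m") (auto simp: w_def)
  ultimately show ?thesis
    using ab by (intro exI[of _ w] exI[of _ "m - (b - a)"]) (auto simp: w_def)
qed

lemma matrix_power_entry_pos_within_dimension:
  fixes A :: "real^'n^'n"
  assumes "nonneg_matrix A" and "0 < matrix_power A m $ i $ j"
  shows "\<exists>m'<CARD('n). 0 < matrix_power A m' $ i $ j"
  using assms(2)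
proof (induction m rule: less_induct)
  case (less m)
  show ?case
  proof (cases "m < CARD('n)")
    case False
    obtain v where "v 0 = i" "v m = j" "positive_walk A m v"
      using less.prems matrix_power_entry_pos_iff_walk[OF assms(1)] by blast
    then obtain w m' where "m' < m" "w 0 = i" "w m' = j" "positive_walk A m' w"
      using positive_walk_shorten[of A m v] False by auto
    then show ?thesis
      using less.IH matrix_power_entry_pos_iff_walk[OF assms(1)] by blast
  qed (use less.prems in blast)
qed

lemma finite_pos_lower_bound:
  fixes X :: "real set"
  assumes "finite X"
  obtains \<delta> where "0 < \<delta>" "\<And>x. x \<in> X \<Longrightarrow> 0 < x \<Longrightarrow> \<delta> \<le> x"
proof
  show "0 < Min (insert 1 {x\<in>X. 0 < x})"
    using assms by (subst Min_gr_iff) auto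
  show "Min (insert 1 {x\<in>X. 0 < x}) \<le> x" if "x \<in> X" "0 < x" for x
    using assms that by (intro Min_le) auto
qed

lemma matrix_power_entry_pos_lower_bound:
  fixes A :: "real^'n^'n"
  obtains \<delta> where "0 < \<delta>"
    "\<And>m i j. m < CARD('n) \<Longrightarrow> 0 < matrix_power A m $ i $ j \<Longrightarrow> \<delta> \<le> matrix_power A m $ i $ j"
proof -
  have fin: "finite ((\<lambda>(m, i, j). matrix_power A m $ i $ j) ` ({..<CARD('n)} \<times> UNIV \<times> UNIV))"
    by simp
  obtain \<delta> where "0 < \<delta>"
    and \<delta>: "\<And>x. x \<in> (\<lambda>(m, i, j). matrix_power A m $ i $ j) ` ({..<CARD('n)} \<times> UNIV \<times> UNIV) \<Longrightarrow>
      0 < x \<Longrightarrow> \<delta> \<le> x"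
    using finite_pos_lower_bound[OF fin] by blast
  show ?thesis
  proof (rule that[OF \<open>0 < \<delta>\<close>])
    fix m i j
    assume "m < CARD('n)" "0 < matrix_power A m $ i $ j"
    then show "\<delta> \<le> matrix_power A m $ i $ j"
      by (intro \<delta>) (auto intro: image_eqI[of _ _ "(m, i, j)"])
  qed
qed

section \<open>The binomial series\<close>

lemma gbinomial_Suc_eq:
  fixes s :: "'a::field_char_0"
  shows "s gchoose Suc m = (s gchoose m) * (s - of_nat m) / of_nat (Suc m)"
proof -
  have "of_nat (Suc m) * (s gchoose Suc m) = (s - of_nat m) * (s gchoose m)"
    by (simp only: gbinomial_absorption gbinomial_absorb_comp)
  then show ?thesis
    by (simp add: divide_simps mult.commute del: of_nat_Suc)
qed

lemma gbinomial_nonneg: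
  fixes s :: real
  assumes "real d - 1 \<le> s"
  shows "0 \<le> s gchoose d"
  unfolding gbinomial_prod_rev using assms
  by (intro divide_nonneg_nonneg prod_nonneg) auto

lemma abs_gbinomial_le_geometric:
  fixes s K :: real
  assumes K: "1 \<le> K" "s + 1 \<le> K" and s: "-1 \<le> s" and "d \<le> m"
  shows "\<bar>s gchoose m\<bar> \<le> \<bar>s gchoose d\<bar> * K ^ (m - d)"
  using \<open>d \<le> m\<close>
proof (induction m rule: dec_induct)
  case (step k)
  have "real k \<le> K * real k"
    using K(1) mult_right_mono[of 1 K "real k"] by simp
  then have "\<bar>s - real k\<bar> \<le> K * Suc k"
    using K s by (simp add: abs_le_iff algebra_simps)
  then have "\<bar>s - real k\<bar> / Suc k \<le> K"
    by (simp add: divide_le_eq del: of_nat_Suc)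
  have "\<bar>s gchoose Suc k\<bar> = \<bar>s gchoose k\<bar> * (\<bar>s - real k\<bar> / Suc k)"
    by (simp add: gbinomial_Suc_eq abs_mult abs_divide del: of_nat_Suc)
  also have "\<dots> \<le> \<bar>s gchoose k\<bar> * K"
    using \<open>\<bar>s - real k\<bar> / Suc k \<le> K\<close> by (rule mult_left_mono) simp
  also have "\<dots> \<le> \<bar>s gchoose d\<bar> * K ^ (k - d) * K"
    using step.IH K by (intro mult_right_mono) auto
  finally show ?case
    using step.hyps by (simp add: Suc_diff_le mult_ac)
qed simp

lemma suminf_ge_neg_geometric:
  fixes b :: "nat \<Rightarrow> real"
  assumes "summable b" and b: "\<And>j. - (C * q ^ Suc j) \<le> b j" and "0 \<le> C" "0 \<le> q" "q \<le> 1/2"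
  shows "- (2 * C * q) \<le> suminf b"
proof -
  have geom: "(\<lambda>j. - (C * q) * q ^ j) sums (- (C * q) * (1 / (1 - q)))"
    using assms by (intro sums_mult[OF geometric_sums]) auto
  have le: "- (C * q) * q ^ j \<le> b j" for j
    using b[of j] by (simp add: mult.assoc)
  have "1 / (1 - q) \<le> 2"
    using assms by (auto simp: field_simps)
  then have "- (2 * C * q) \<le> - (C * q) * (1 / (1 - q))"
    using assms mult_left_mono[of "1 / (1 - q)" 2 "C * q"] by simp
  also have "\<dots> \<le> suminf b"
    using sums_le[OF le geom summable_sums[OF \<open>summable b\<close>]] .
  finally show ?thesis .
qed

lemma abs_binomial_term_le_geometric:
  fixes a :: "nat \<Rightarrow> real"
  assumes a: "\<And>m. 0 \<le> a m" "\<And>m. a m \<le> S ^ m"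
    and s: "real d - 1 \<le> s" "s + 1 \<le> K" and K: "1 \<le> K" and "0 \<le> \<epsilon>"
  shows "\<bar>(s gchoose (j + Suc d)) * \<epsilon> ^ (j + Suc d) * a (j + Suc d)\<bar>
    \<le> (s gchoose d) * \<epsilon> ^ d * S ^ d * (\<epsilon> * K * S) ^ Suc j"
proof -
  have "0 \<le> s gchoose d"
    using s(1) by (rule gbinomial_nonneg)
  then have "\<bar>s gchoose (j + Suc d)\<bar> \<le> (s gchoose d) * K ^ Suc j"
    using abs_gbinomial_le_geometric[of K s d "j + Suc d"] s K by simp
  then have "\<bar>(s gchoose (j + Suc d)) * \<epsilon> ^ (j + Suc d) * a (j + Suc d)\<bar>
      \<le> (s gchoose d) * K ^ Suc j * \<epsilon> ^ (j + Suc d) * S ^ (j + Suc d)"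
    using a(1) a(2)[of "j + Suc d"] \<open>0 \<le> \<epsilon>\<close>
    by (simp add: abs_mult del: add_Suc_right) (intro mult_mono; simp)
  also have "\<dots> = (s gchoose d) * \<epsilon> ^ d * S ^ d * (\<epsilon> * K * S) ^ Suc j"
    by (simp add: power_add power_mult_distrib mult_ac)
  finally show ?thesis .
qed

text \<open>The first nonzero term is at least \<open>(s gchoose d) \<epsilon>\<^sup>d \<delta>\<close>, and the remaining terms are
  bounded by a geometric series of ratio \<open>\<epsilon> K S\<close> starting from a smaller value.\<close>

lemma binomial_series_nonneg:
  fixes a :: "nat \<Rightarrow> real"
  assumes sums: "(\<lambda>m. (s gchoose m) * \<epsilon> ^ m * a m) sums x"
    and a: "\<And>m. 0 \<le> a m" "\<And>m. a m \<le> S ^ m" "\<And>m. m < d \<Longrightarrow> a m = 0" "\<delta> \<le> a d"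
    and s: "real d - 1 \<le> s" "s + 1 \<le> K" and K: "1 \<le> K"
    and \<epsilon>: "0 \<le> \<epsilon>" "\<epsilon> * K * S \<le> 1/2" "2 * \<epsilon> * K * S ^ Suc d \<le> \<delta>"
  shows "0 \<le> x"
proof -
  define b where "b = (\<lambda>m. (s gchoose m) * \<epsilon> ^ m * a m)"
  have "summable b" and x: "x = suminf b"
    using sums by (simp_all add: b_def sums_iff)
  have "0 \<le> S"
    using a(1)[of 1] a(2)[of 1] by simp
  define g where "g = s gchoose d"
  define q where "q = \<epsilon> * K * S"
  define C where "C = g * \<epsilon> ^ d * S ^ d"
  have "0 \<le> g"
    using s(1) by (simp add: g_def gbinomial_nonneg)
  have "0 \<le> q" "0 \<le> C"
    using \<open>0 \<le> g\<close> \<open>0 \<le> S\<close> \<epsilon>(1) K by (simp_all add: q_def C_def)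
  have tail: "- (C * q ^ Suc j) \<le> b (j + Suc d)" for j
    using abs_binomial_term_le_geometric[OF a(1,2) s K \<epsilon>(1), of j]
    by (simp add: b_def C_def q_def g_def abs_le_iff)
  have "- (2 * C * q) \<le> (\<Sum>j. b (j + Suc d))"
    using suminf_ge_neg_geometric[OF summable_ignore_initial_segment[OF \<open>summable b\<close>] tail]
      \<open>0 \<le> C\<close> \<open>0 \<le> q\<close> \<epsilon>(2) by (simp add: q_def)
  moreover have "suminf b = (\<Sum>j. b (j + Suc d)) + b d"
    using suminf_split_initial_segment[OF \<open>summable b\<close>, of "Suc d"] a(3) by (simp add: b_def)
  moreover have "2 * C * q \<le> g * \<epsilon> ^ d * \<delta>"
  proof -
    have "2 * C * q = g * \<epsilon> ^ d * (2 * \<epsilon> * K * S ^ Suc d)"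
      by (simp add: C_def q_def mult_ac)
    also have "\<dots> \<le> g * \<epsilon> ^ d * \<delta>"
      using \<epsilon> \<open>0 \<le> g\<close> by (intro mult_left_mono) auto
    finally show ?thesis .
  qed
  moreover have "g * \<epsilon> ^ d * \<delta> \<le> b d"
    unfolding b_def g_def using a(4) \<open>0 \<le> g\<close> \<epsilon>(1) by (intro mult_left_mono) (auto simp: g_def)
  ultimately show ?thesis
    unfolding x by linarith
qed

lemma binomial_series_nonneg_within:
  fixes a :: "nat \<Rightarrow> real"
  assumes sums: "(\<lambda>m. (s gchoose m) * \<epsilon> ^ m * a m) sums x"
    and a: "\<And>m. 0 \<le> a m" "\<And>m. a m \<le> S ^ m" and early: "\<And>m. 0 < a m \<Longrightarrow> \<exists>m'<N. 0 < a m'"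
    and \<delta>: "\<And>m. m < N \<Longrightarrow> 0 < a m \<Longrightarrow> \<delta> \<le> a m"
    and s: "real N - 2 \<le> s" "s \<le> real N - 1"
    and \<epsilon>: "0 \<le> \<epsilon>" "\<epsilon> * N * S \<le> 1/2" "\<And>d. d < N \<Longrightarrow> 2 * \<epsilon> * N * S ^ Suc d \<le> \<delta>"
  shows "0 \<le> x"
proof (cases "\<exists>m. 0 < a m")
  case False
  then have "(\<lambda>m. (s gchoose m) * \<epsilon> ^ m * a m) = (\<lambda>_. 0)"
    using a(1) by (force simp: less_le)
  then show ?thesis
    using sums sums_unique2[OF sums_zero] by fastforce
next
  case True
  define d where "d = (LEAST m. 0 < a m)"
  have "0 < a d"
    unfolding d_def using True by (metis LeastI)
  have below: "a m = 0" if "m < d" for m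
    using not_less_Least[OF that[unfolded d_def]] a(1)[of m] by simp
  obtain m' where "m' < N" "0 < a m'"
    using early[OF \<open>0 < a d\<close>] by blast
  then have "d < N"
    unfolding d_def by (meson Least_le le_less_trans)
  show ?thesis
  proof (rule binomial_series_nonneg[OF sums a below])
    show "\<delta> \<le> a d"
      using \<delta> \<open>d < N\<close> \<open>0 < a d\<close> by blast
    show "real d - 1 \<le> s" "s + 1 \<le> real N" "1 \<le> real N"
      using s \<open>d < N\<close> by linarith+
  qed (use \<epsilon> \<open>d < N\<close> in auto)
qed

lemma spectral_matrix_binomial_series:
  assumes "orthonormal_frame y" and small: "\<And>k. \<bar>\<epsilon> * f k\<bar> < 1"
  shows "(\<lambda>m. (s gchoose m) * \<epsilon> ^ m * matrix_power (spectral_matrix y f) m $ i $ j) sums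
    spectral_matrix y (\<lambda>k. (1 + \<epsilon> * f k) powr s) $ i $ j"
proof -
  have "(\<lambda>m. \<Sum>k\<in>UNIV. y k $ i * y k $ j * ((s gchoose m) * (\<epsilon> * f k) ^ m)) sums
      (\<Sum>k\<in>UNIV. y k $ i * y k $ j * (1 + \<epsilon> * f k) powr s)"
    using small by (intro sums_sum sums_mult[OF gen_binomial_real])
  then show ?thesis
    by (simp add: spectral_matrix_power[OF assms(1)] spectral_matrix_entry power_mult_distrib
        sum_distrib_left mult_ac)
qed

section \<open>Real powers of a small shift of the identity\<close>

lemma abs_quadratic_form_le_entry_sum:
  fixes M :: "real^'n^'n"
  assumes "norm x \<le> 1"
  shows "\<bar>x \<bullet> (M *v x)\<bar> \<le> entry_sum (\<chi> i j. \<bar>M $ i $ j\<bar>)"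
proof -
  have x: "\<bar>x $ i\<bar> \<le> 1" for i
    using component_le_norm_cart[of x i] assms by simp
  have "\<bar>x \<bullet> (M *v x)\<bar> = \<bar>\<Sum>i\<in>UNIV. \<Sum>j\<in>UNIV. x $ i * M $ i $ j * x $ j\<bar>"
    by (simp add: inner_vec_def matrix_vector_mult_def sum_distrib_left mult.assoc)
  also have "\<dots> \<le> (\<Sum>i\<in>UNIV. \<Sum>j\<in>UNIV. \<bar>x $ i\<bar> * \<bar>M $ i $ j\<bar> * \<bar>x $ j\<bar>)"
    by (rule order_trans[OF sum_abs sum_mono]) (simp add: order_trans[OF sum_abs] abs_mult)
  also have "\<dots> \<le> (\<Sum>i\<in>UNIV. \<Sum>j\<in>UNIV. \<bar>M $ i $ j\<bar>)"
  proof (intro sum_mono)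
    fix i j
    have "\<bar>x $ i\<bar> * \<bar>x $ j\<bar> \<le> 1"
      using x by (simp add: mult_le_one)
    then show "\<bar>x $ i\<bar> * \<bar>M $ i $ j\<bar> * \<bar>x $ j\<bar> \<le> \<bar>M $ i $ j\<bar>"
      using mult_left_le[of "\<bar>x $ i\<bar> * \<bar>x $ j\<bar>" "\<bar>M $ i $ j\<bar>"] by (simp add: mult_ac)
  qed
  finally show ?thesis
    by (simp add: entry_sum_def)
qed

lemma spectral_matrix_eigenvalue_bound:
  assumes "orthonormal_frame y"
  shows "\<bar>f k\<bar> \<le> entry_sum (\<chi> i j. \<bar>spectral_matrix y f $ i $ j\<bar>)"
proof -
  have "norm (y k) = 1"
    using orthonormal_frame_inner[OF assms, of k k] by (simp add: norm_eq_1)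
  moreover have "y k \<bullet> (spectral_matrix y f *v y k) = f k"
    using orthonormal_frame_inner[OF assms, of k k] by (simp add: spectral_matrix_eigenvector[OF assms])
  ultimately show ?thesis
    using abs_quadratic_form_le_entry_sum[of "y k" "spectral_matrix y f"] by simp
qed

lemma nonneg_spectral_matrix_powr:
  fixes A :: "real^'n^'n" and \<epsilon> \<delta> :: real
  assumes A: "nonneg_matrix A" and y: "orthonormal_frame y" "\<epsilon> *\<^sub>R A + mat 1 = spectral_matrix y \<mu>"
    and s: "real CARD('n) - 2 \<le> s" "s \<le> real CARD('n) - 1"
    and \<delta>: "\<And>m i j. m < CARD('n) \<Longrightarrow> 0 < matrix_power A m $ i $ j \<Longrightarrow> \<delta> \<le> matrix_power A m $ i $ j"
    and \<epsilon>: "0 < \<epsilon>" "\<epsilon> * CARD('n) * entry_sum A \<le> 1/2"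
      "\<And>d. d < CARD('n) \<Longrightarrow> 2 * \<epsilon> * CARD('n) * entry_sum A ^ Suc d \<le> \<delta>"
  shows "nonneg_matrix (spectral_matrix y (\<lambda>k. \<mu> k powr s))"
proof -
  define f where "f k = (\<mu> k - 1) / \<epsilon>" for k
  have A_f: "A = spectral_matrix y f"
    using spectral_matrix_of_shift[OF y(1) _ y(2)] \<epsilon>(1) by (simp add: f_def[abs_def])
  have \<mu>_f: "1 + \<epsilon> * f k = \<mu> k" for k
    using \<epsilon>(1) by (simp add: f_def)
  have "(\<chi> i j. \<bar>A $ i $ j\<bar>) = A"
    using A by (simp add: vec_eq_iff nonneg_matrix_def)
  then have f: "\<bar>f k\<bar> \<le> entry_sum A" for k
    using spectral_matrix_eigenvalue_bound[OF y(1), of f k] A_f by simp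
  have small: "\<bar>\<epsilon> * f k\<bar> < 1" for k
  proof -
    have "\<bar>\<epsilon> * f k\<bar> \<le> \<epsilon> * entry_sum A * 1"
      using f \<epsilon>(1) by (simp add: abs_mult mult_left_mono)
    also have "\<dots> \<le> \<epsilon> * entry_sum A * CARD('n)"
      using f[of k] \<epsilon>(1) by (intro mult_left_mono) auto
    finally show ?thesis
      using \<epsilon>(2) by (simp add: mult_ac)
  qed
  show ?thesis
    unfolding nonneg_matrix_def
  proof (intro allI)
    fix i j
    have "(\<lambda>m. (s gchoose m) * \<epsilon> ^ m * matrix_power A m $ i $ j) sums
        spectral_matrix y (\<lambda>k. \<mu> k powr s) $ i $ j"
      using spectral_matrix_binomial_series[OF y(1), of \<epsilon> f s i j, OF small] unfolding A_f[symmetric] \<mu>_f .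
    then show "0 \<le> spectral_matrix y (\<lambda>k. \<mu> k powr s) $ i $ j"
    proof (rule binomial_series_nonneg_within[where \<delta> = \<delta> and S = "entry_sum A" and N = "CARD('n)"])
      show "0 < matrix_power A m $ i $ j \<Longrightarrow> \<exists>m'<CARD('n). 0 < matrix_power A m' $ i $ j" for m
        using matrix_power_entry_pos_within_dimension[OF A] .
    qed (use nonneg_matrix_power[OF A] matrix_power_entry_le[OF A] \<delta> s \<epsilon> in
      \<open>auto simp: nonneg_matrix_def\<close>)
  qed
qed

text \<open>The spectral decomposition chosen by \<open>mat_rpow\<close> is arbitrary, so \<open>\<epsilon>\<close> may depend
  only on \<open>A\<close> and the conclusion must hold for every decomposition of \<open>\<epsilon>A + I\<close>.\<close>

lemma nonneg_matrix_powr_small_shift: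
  fixes A :: "real^'n^'n"
  assumes A: "nonneg_matrix A"
  obtains \<epsilon> where "0 < \<epsilon>"
    "\<And>y \<mu> s. orthonormal_frame y \<Longrightarrow> \<epsilon> *\<^sub>R A + mat 1 = spectral_matrix y \<mu> \<Longrightarrow>
      real CARD('n) - 2 \<le> s \<Longrightarrow> s \<le> real CARD('n) - 1 \<Longrightarrow>
      nonneg_matrix (spectral_matrix y (\<lambda>k. \<mu> k powr s))"
proof -
  let ?n = "real CARD('n)" and ?S = "entry_sum A"
  define T where "T = max 1 ?S ^ CARD('n)"
  have "1 \<le> T"
    by (simp add: T_def)
  have S_pow: "?S ^ Suc d \<le> T" if "d < CARD('n)" for d
  proof -
    have "?S ^ Suc d \<le> max 1 ?S ^ Suc d"
      using A by (intro power_mono) (auto simp: entry_sum_def nonneg_matrix_def sum_nonneg)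
    also have "\<dots> \<le> T"
      unfolding T_def using that by (intro power_increasing) auto
    finally show ?thesis .
  qed
  obtain \<delta> where "0 < \<delta>"
    and \<delta>: "\<And>m i j. m < CARD('n) \<Longrightarrow> 0 < matrix_power A m $ i $ j \<Longrightarrow> \<delta> \<le> matrix_power A m $ i $ j"
    using matrix_power_entry_pos_lower_bound by blast
  define \<epsilon> where "\<epsilon> = min 1 \<delta> / (2 * ?n * T)"
  have "0 < \<epsilon>"
    using \<open>0 < \<delta>\<close> \<open>1 \<le> T\<close> by (simp add: \<epsilon>_def)
  have \<epsilon>T: "\<epsilon> * ?n * T = min 1 \<delta> / 2"
    using \<open>1 \<le> T\<close> by (simp add: \<epsilon>_def)
  have \<epsilon>S: "2 * \<epsilon> * ?n * ?S ^ Suc d \<le> min 1 \<delta>" if "d < CARD('n)" for d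
  proof -
    have "2 * \<epsilon> * ?n * ?S ^ Suc d \<le> 2 * \<epsilon> * ?n * T"
      using S_pow[OF that] \<open>0 < \<epsilon>\<close> by (intro mult_left_mono) auto
    also have "\<dots> = min 1 \<delta>"
      using \<epsilon>T by simp
    finally show ?thesis .
  qed
  show ?thesis
  proof (rule that[OF \<open>0 < \<epsilon>\<close>], rule nonneg_spectral_matrix_powr[OF A _ _ _ _ \<delta>])
    show "\<epsilon> * ?n * ?S \<le> 1/2"
      using \<epsilon>S[of 0] by simp
    show "2 * \<epsilon> * ?n * ?S ^ Suc d \<le> \<delta>" if "d < CARD('n)" for d
      using \<epsilon>S[OF that] by simp
  qed (use \<open>0 < \<epsilon>\<close> in auto)
qed

lemma nat_plus_bounded_remainder:
  fixes t c :: real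
  assumes "c \<le> t"
  obtains p :: nat and s where "t = real p + s" "c \<le> s" "s \<le> c + 1"
proof
  let ?p = "nat \<lfloor>t - c\<rfloor>"
  show "t = real ?p + (t - real ?p)"
    by simp
  show "c \<le> t - real ?p" "t - real ?p \<le> c + 1"
    using assms of_int_floor_le[of "t - c"] real_of_int_floor_add_one_gt[of "t - c"] by linarith+
qed

lemma doubly_nonnegative_mat_rpow:
  fixes B :: "real^'n^'n"
  assumes "positive_definite B" "nonneg_matrix B" "c \<le> t"
    and powr_nonneg: "\<And>y \<mu> s. orthonormal_frame y \<Longrightarrow> B = spectral_matrix y \<mu> \<Longrightarrow>
      c \<le> s \<Longrightarrow> s \<le> c + 1 \<Longrightarrow> nonneg_matrix (spectral_matrix y (\<lambda>k. \<mu> k powr s))"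
  shows "doubly_nonnegative (mat_rpow B t)"
proof -
  obtain y \<mu> where y: "orthonormal_frame y" and \<mu>: "\<And>k. 0 < \<mu> k" and B: "B = spectral_matrix y \<mu>"
    and Bt: "mat_rpow B t = spectral_matrix y (\<lambda>k. \<mu> k powr t)"
    using mat_rpow_spectral[OF assms(1)] by blast
  obtain p s where "t = real p + s" "c \<le> s" "s \<le> c + 1"
    using nat_plus_bounded_remainder[OF \<open>c \<le> t\<close>] .
  then have "mat_rpow B t = matrix_power B p ** spectral_matrix y (\<lambda>k. \<mu> k powr s)"
    and "nonneg_matrix (spectral_matrix y (\<lambda>k. \<mu> k powr s))"
    using Bt B spectral_matrix_powr_add[OF y \<mu>] powr_nonneg[OF y B] by simp_all
  then have "nonneg_matrix (mat_rpow B t)"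
    using \<open>nonneg_matrix B\<close> by (simp add: nonneg_matrix_mult nonneg_matrix_power)
  then show ?thesis
    using Bt \<mu> by (simp add: doubly_nonnegative_spectral_matrix less_imp_le)
qed

theorem theorem5p1:
  fixes A :: "real^'n^'n"
  assumes "doubly_nonnegative A"
  shows "\<exists>\<epsilon>>0. \<forall>t::real. t \<ge> real CARD('n) - 2 \<longrightarrow>
           doubly_nonnegative (mat_rpow (\<epsilon> *\<^sub>R A + mat 1) t)"
proof -
  have psd: "positive_semidefinite A" and nonneg: "nonneg_matrix A"
    using assms by (simp_all add: doubly_nonnegative_def nonneg_matrix_def)
  obtain \<epsilon> where "0 < \<epsilon>" and powr_nonneg: "\<And>y \<mu> s. orthonormal_frame y \<Longrightarrow>
      \<epsilon> *\<^sub>R A + mat 1 = spectral_matrix y \<mu> \<Longrightarrow> real CARD('n) - 2 \<le> s \<Longrightarrow>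
      s \<le> real CARD('n) - 1 \<Longrightarrow> nonneg_matrix (spectral_matrix y (\<lambda>k. \<mu> k powr s))"
    using nonneg_matrix_powr_small_shift[OF nonneg] by blast
  have "positive_definite (\<epsilon> *\<^sub>R A + mat 1)" and "nonneg_matrix (\<epsilon> *\<^sub>R A + mat 1)"
    using positive_definite_identity_plus[OF psd] nonneg \<open>0 < \<epsilon>\<close>
    by (simp_all add: nonneg_matrix_def mat_def)
  then have "doubly_nonnegative (mat_rpow (\<epsilon> *\<^sub>R A + mat 1) t)" if "real CARD('n) - 2 \<le> t" for t
    by (rule doubly_nonnegative_mat_rpow[OF _ _ that]) (auto intro: powr_nonneg)
  then show ?thesis
    using \<open>0 < \<epsilon>\<close> by blast
qed

end
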